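(* Let $\mu$ be a strict partition and $S=\mathcal Q(\mu,\mu+(1))$. Then $$\mathcal E F_S(z,t)=F_S(z,1)+F_{ES}(z,t)\qquad\text{and}\qquad \mathcal N F_S(z,t)=F_{MS}(z,1)+F_{NS}(z,t).$$
   Context: Partitions are weakly decreasing sequences of nonnegative integers with finitely many nonzero parts, identified with Ferrers boards; $|\alpha|$ is the weight. $\alpha$ contains $\mu$ if deleting some rows and some columns of the Ferrers board of $\alpha$ and top/left-justifying yields $\mu$; otherwise $\alpha$ avoids $\mu$. Strict: positive parts distinct. $\alpha+\beta$ is componentwise sum; $(w^m)$ is the partition with $m$ parts equal to $w$. $m(\alpha)$ is the multiplicity of the largest part of $\alpha$. $\mathcal Q(\tau,\mu)$ is the set of partitions of positive weight containing $\tau$ and avoiding $\mu$. For a set $S$ of partitions, $F_S(z,t)=\sum_{\alpha\in S}z^{|\alpha|}t^{m(\alpha)}$. For a partition $\alpha$: $E(\alpha)=\{\alpha+(1^c):0<c\le m(\alpha)\}$, $M(\alpha)=\{\alpha+(w^{m(\alpha)}):w\ge0\}$, $N(\alpha)=\{\alpha+(w^{m(\alpha)})+(1^c):w\ge0,\ 0<c<m(\alpha)\}$; $ES,MS,NS$ are the unions over $\alpha\in S$. Operators on $G(z,t)=\sum_{n\ge1}\sum_{m\ge0}a_{n,m}z^nt^m$: $\mathcal E G(z,t)=\frac{G(z,1)-ztG(z,zt)}{1-zt}$ and $\mathcal N G(z,t)=G(z,0)+\sum_{n\ge1}\sum_{m\ge1}a_{n,m}\frac{1}{1-z^m}\cdot\frac{1-(tz)^m}{1-tz}z^n$.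 *)

theory Defs
  imports "HOL-Analysis.Analysis"
begin

text \<open>Partitions are represented as functions nat => nat (the sequence of parts,
indexed from 0), weakly decreasing and with finitely many nonzero parts.\<close>

definition partition :: "(nat \<Rightarrow> nat) \<Rightarrow> bool" where
  "partition \<alpha> \<longleftrightarrow> (\<forall>i. \<alpha> (Suc i) \<le> \<alpha> i) \<and> finite {i. \<alpha> i \<noteq> 0}"

definition weight :: "(nat \<Rightarrow> nat) \<Rightarrow> nat" where
  "weight \<alpha> = (\<Sum>i\<in>{i. \<alpha> i \<noteq> 0}. \<alpha> i)"

definition strict_partition :: "(nat \<Rightarrow> nat) \<Rightarrow> bool" where
  "strict_partition \<alpha> \<longleftrightarrow> partition \<alpha> \<and>
     (\<forall>i j. i \<noteq> j \<longrightarrow> 0 < \<alpha> i \<longrightarrow> \<alpha> i \<noteq> \<alpha> j)"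

text \<open>Containment: keep the rows f 0 < f 1 < ... and the columns in C; the row
f a of the Ferrers board of alpha then contributes the cells of C left of alpha (f a),
which after left-justification is a row of length card {c in C. c < alpha (f a)}.
(Rows beyond the length of alpha are zero rows, so taking infinitely many kept
rows loses no generality.)\<close>

definition contains :: "(nat \<Rightarrow> nat) \<Rightarrow> (nat \<Rightarrow> nat) \<Rightarrow> bool" where
  "contains \<alpha> \<mu> \<longleftrightarrow> (\<exists>f C. strict_mono f \<and> (\<forall>a. \<mu> a = card {c\<in>C. c < \<alpha> (f a)}))"

definition padd :: "(nat \<Rightarrow> nat) \<Rightarrow> (nat \<Rightarrow> nat) \<Rightarrow> (nat \<Rightarrow> nat)" where
  "padd \<alpha> \<beta> = (\<lambda>i. \<alpha> i + \<beta> i)"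

definition rect :: "nat \<Rightarrow> nat \<Rightarrow> (nat \<Rightarrow> nat)" where
  "rect w m = (\<lambda>i. if i < m then w else 0)"

text \<open>Multiplicity of the largest part (0 for the empty partition).\<close>
definition mult :: "(nat \<Rightarrow> nat) \<Rightarrow> nat" where
  "mult \<alpha> = card {i. 0 < \<alpha> i \<and> \<alpha> i = \<alpha> 0}"

definition Q :: "(nat \<Rightarrow> nat) \<Rightarrow> (nat \<Rightarrow> nat) \<Rightarrow> (nat \<Rightarrow> nat) set" where
  "Q \<tau> \<mu> = {\<alpha>. partition \<alpha> \<and> 0 < weight \<alpha> \<and> contains \<alpha> \<tau> \<and> \<not> contains \<alpha> \<mu>}"

definition Eset :: "(nat \<Rightarrow> nat) \<Rightarrow> (nat \<Rightarrow> nat) set" where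
  "Eset \<alpha> = {padd \<alpha> (rect 1 c) | c. 0 < c \<and> c \<le> mult \<alpha>}"

definition Mset :: "(nat \<Rightarrow> nat) \<Rightarrow> (nat \<Rightarrow> nat) set" where
  "Mset \<alpha> = {padd \<alpha> (rect w (mult \<alpha>)) | w. True}"

definition Nset :: "(nat \<Rightarrow> nat) \<Rightarrow> (nat \<Rightarrow> nat) set" where
  "Nset \<alpha> = {padd (padd \<alpha> (rect w (mult \<alpha>))) (rect 1 c) | w c. 0 < c \<and> c < mult \<alpha>}"

definition ES :: "(nat \<Rightarrow> nat) set \<Rightarrow> (nat \<Rightarrow> nat) set" where
  "ES S = (\<Union>\<alpha>\<in>S. Eset \<alpha>)"
definition MS :: "(nat \<Rightarrow> nat) set \<Rightarrow> (nat \<Rightarrow> nat) set" where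
  "MS S = (\<Union>\<alpha>\<in>S. Mset \<alpha>)"
definition NS :: "(nat \<Rightarrow> nat) set \<Rightarrow> (nat \<Rightarrow> nat) set" where
  "NS S = (\<Union>\<alpha>\<in>S. Nset \<alpha>)"

text \<open>Generating functions, read as complex-analytic functions (|z| < 1, |t| <= 1).
A series G is given by its coefficient array a n m (coefficient of z^n t^m).\<close>

definition gf :: "(nat \<Rightarrow> nat \<Rightarrow> nat) \<Rightarrow> complex \<Rightarrow> complex \<Rightarrow> complex" where
  "gf a z t = infsum (\<lambda>(n, m). of_nat (a n m) * z ^ n * t ^ m) UNIV"

definition coeffs :: "(nat \<Rightarrow> nat) set \<Rightarrow> nat \<Rightarrow> nat \<Rightarrow> nat" where
  "coeffs S n m = card {\<alpha>\<in>S. weight \<alpha> = n \<and> mult \<alpha> = m}"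

definition F :: "(nat \<Rightarrow> nat) set \<Rightarrow> complex \<Rightarrow> complex \<Rightarrow> complex" where
  "F S z t = gf (coeffs S) z t"

definition opE :: "(nat \<Rightarrow> nat \<Rightarrow> nat) \<Rightarrow> complex \<Rightarrow> complex \<Rightarrow> complex" where
  "opE a z t = (gf a z 1 - z * t * gf a z (z * t)) / (1 - z * t)"

definition opN :: "(nat \<Rightarrow> nat \<Rightarrow> nat) \<Rightarrow> complex \<Rightarrow> complex \<Rightarrow> complex" where
  "opN a z t = gf a z 0 +
     infsum (\<lambda>(n, m). of_nat (a n m) * (1 / (1 - z ^ m)) * ((1 - (t * z) ^ m) / (1 - t * z)) * z ^ n)
       {(n, m). 1 \<le> n \<and> 1 \<le> m}"

end

theory Submission
  imports Defs
begin

text \<open>Every \<open>\<alpha> \<in> S\<close> has a positive largest part, and raising the \<open>m(\<alpha>)\<close> largest parts of a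
  partition \<open>\<alpha>\<close> containing \<open>\<mu>\<close> by some \<open>w > 0\<close> gives a partition containing \<open>\<mu> + (1)\<close>; hence
  \<open>M(\<alpha>)\<close> meets \<open>S\<close> only in \<open>\<alpha>\<close>. Since \<open>\<alpha> + (1^c)\<close> has largest-part multiplicity \<open>c\<close>, the
  parametrisations \<open>(\<alpha>, c) \<mapsto> \<alpha> + (1^c)\<close>, \<open>(\<alpha>, w) \<mapsto> \<alpha> + (w^m(\<alpha>))\<close> and
  \<open>(\<alpha>, w, c) \<mapsto> \<alpha> + (w^m(\<alpha>)) + (1^c)\<close> of \<open>ES\<close>, \<open>MS\<close> and \<open>NS\<close> are therefore injective, and
  both identities hold summand by summand in \<open>\<alpha>\<close>. Writing \<open>n = |\<alpha>|\<close>, \<open>m = m(\<alpha>)\<close> and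
  \<open>x = zt\<close>, they reduce to \<open>z^n (1 + x + \<dots> + x^m) (1 - x) = z^n - x z^n x^m\<close> and
  \<open>\<Sum>\<^sub>w z^(n + wm) (1 + x + \<dots> + x^(m-1)) = z^n / (1 - z^m) \<cdot> (1 - x^m) / (1 - x)\<close>.
  All rearrangements are justified by the absolute convergence of \<open>\<Sum>\<^sub>\<alpha> |z|^|\<alpha>|\<close> over all
  partitions, which follows from Euler's product.\<close>

section \<open>Partitions and their weight\<close>

lemma partition_antimono:
  assumes "partition \<alpha>" "i \<le> j"
  shows "\<alpha> j \<le> \<alpha> i"
proof -
  have "\<And>n. \<alpha> (Suc n) \<le> \<alpha> n" using assms(1) unfolding partition_def by blast
  then show ?thesis using lift_Suc_antimono_le[of \<alpha>, OF _ assms(2)] by blast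
qed

lemma partition_eventually_zero:
  assumes "partition \<alpha>"
  shows "\<exists>N. \<forall>i\<ge>N. \<alpha> i = 0"
proof -
  have "finite {i. \<alpha> i \<noteq> 0}" using assms unfolding partition_def by (rule conjunct2)
  then obtain N where N: "\<And>i. i \<in> {i. \<alpha> i \<noteq> 0} \<Longrightarrow> i < N"
    using finite_nat_bounded by (metis lessThan_iff subsetD)
  have "\<alpha> i = 0" if "i \<ge> N" for i
    using N[of i] that by auto
  then show ?thesis by auto
qed

lemma weight_eq_sum_lessThan:
  assumes "\<And>i. N \<le> i \<Longrightarrow> \<alpha> i = 0"
  shows "weight \<alpha> = sum \<alpha> {..<N}"
proof -
  have "{i. \<alpha> i \<noteq> 0} \<subseteq> {..<N}"
  proof
    fix i assume "i \<in> {i. \<alpha> i \<noteq> 0}"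
    then have "\<not> N \<le> i" using assms[of i] by auto
    then show "i \<in> {..<N}" by simp
  qed
  then show ?thesis unfolding weight_def by (intro sum.mono_neutral_left) auto
qed

lemma partition_le_weight:
  assumes "partition \<alpha>"
  shows "\<alpha> i \<le> weight \<alpha>"
proof -
  obtain N where N: "\<forall>i\<ge>N. \<alpha> i = 0" using partition_eventually_zero[OF assms] by blast
  show ?thesis
  proof (cases "i < N")
    case True
    then have "\<alpha> i \<le> sum \<alpha> {..<N}" by (intro member_le_sum) auto
    then show ?thesis using N weight_eq_sum_lessThan by metis
  qed (use N in auto)
qed

text \<open>All nonzero parts are at least 1, so a partition has at most as many of them as its weight.\<close>

lemma partition_zero_beyond_weight:
  assumes "partition \<alpha>" "weight \<alpha> \<le> i"
  shows "\<alpha> i = 0"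
proof (rule ccontr)
  assume nz: "\<alpha> i \<noteq> 0"
  obtain N where N: "\<forall>i\<ge>N. \<alpha> i = 0" using partition_eventually_zero[OF assms(1)] by blast
  have "i < N" using N nz by (meson not_le)
  have "sum (\<lambda>_. 1) {..i} \<le> sum \<alpha> {..i}"
    by (intro sum_mono) (use nz partition_antimono[OF assms(1)] in \<open>fastforce\<close>)
  also have "\<dots> \<le> sum \<alpha> {..<N}" using \<open>i < N\<close> by (intro sum_mono2) auto
  also have "\<dots> = weight \<alpha>" using N weight_eq_sum_lessThan by metis
  finally show False using assms(2) by simp
qed

lemma finite_partitions_of_weight: "finite {\<alpha>. partition \<alpha> \<and> weight \<alpha> = n}"
proof (rule finite_subset)
  show "{\<alpha>. partition \<alpha> \<and> weight \<alpha> = n} \<subseteq>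
      {f. \<forall>x. (x \<in> {..<n} \<longrightarrow> f x \<in> {..n}) \<and> (x \<notin> {..<n} \<longrightarrow> f x = 0)}"
  proof
    fix \<alpha> assume "\<alpha> \<in> {\<alpha>. partition \<alpha> \<and> weight \<alpha> = n}"
    then have a: "partition \<alpha>" "weight \<alpha> = n" by auto
    have "\<alpha> x \<in> {..n}" for x using partition_le_weight[OF a(1), of x] a(2) by simp
    moreover have "\<alpha> x = 0" if "x \<notin> {..<n}" for x
      using partition_zero_beyond_weight[OF a(1), of x] a(2) that by simp
    ultimately show "\<alpha> \<in> {f. \<forall>x. (x \<in> {..<n} \<longrightarrow> f x \<in> {..n}) \<and> (x \<notin> {..<n} \<longrightarrow> f x = 0)}"
      by simp
  qed
  show "finite {f. \<forall>x. (x \<in> {..<n} \<longrightarrow> f x \<in> {..n}) \<and> (x \<notin> {..<n} \<longrightarrow> f x = (0::nat))}"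
    by (rule finite_set_of_finite_funs) auto
qed

lemma weight_pos_iff:
  assumes "partition \<alpha>"
  shows "0 < weight \<alpha> \<longleftrightarrow> 0 < \<alpha> 0"
proof
  assume "0 < weight \<alpha>"
  then obtain i where "\<alpha> i \<noteq> 0"
    unfolding weight_def by (metis (mono_tags) mem_Collect_eq not_gr0 sum.neutral)
  then show "0 < \<alpha> 0" using partition_antimono[OF assms, of 0 i] by simp
qed (use partition_le_weight[OF assms, of 0] in simp)

lemma partition_padd_rect:
  assumes "partition \<alpha>"
  shows "partition (padd \<alpha> (rect w m))"
proof -
  have "{i. padd \<alpha> (rect w m) i \<noteq> 0} \<subseteq> {i. \<alpha> i \<noteq> 0} \<union> {..<m}"
    by (auto simp: padd_def rect_def)
  then have "finite {i. padd \<alpha> (rect w m) i \<noteq> 0}"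
    using assms unfolding partition_def by (meson finite_Un finite_lessThan finite_subset)
  moreover have "padd \<alpha> (rect w m) (Suc i) \<le> padd \<alpha> (rect w m) i" for i
    using partition_antimono[OF assms, of i "Suc i"] by (simp add: padd_def rect_def)
  ultimately show ?thesis unfolding partition_def by simp
qed

lemma weight_padd_rect:
  assumes "partition \<alpha>"
  shows "weight (padd \<alpha> (rect w m)) = weight \<alpha> + w * m"
proof -
  obtain N0 where N0: "\<forall>i\<ge>N0. \<alpha> i = 0" using partition_eventually_zero[OF assms] by blast
  define N where "N = max N0 m"
  have "weight \<alpha> = sum \<alpha> {..<N}"
    by (rule weight_eq_sum_lessThan) (use N0 in \<open>simp add: N_def\<close>)
  moreover have "weight (padd \<alpha> (rect w m)) = sum (padd \<alpha> (rect w m)) {..<N}"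
    by (rule weight_eq_sum_lessThan) (use N0 in \<open>simp add: N_def padd_def rect_def\<close>)
  ultimately have "weight (padd \<alpha> (rect w m)) = weight \<alpha> + (\<Sum>i<N. rect w m i)"
    by (simp add: padd_def sum.distrib)
  also have "(\<Sum>i<N. rect w m i) = (\<Sum>i<m. w)"
    by (rule sum.mono_neutral_cong_right) (auto simp: N_def rect_def)
  finally show ?thesis by simp
qed

lemma padd_right_cancel: "padd \<alpha> \<gamma> = padd \<beta> \<gamma> \<Longrightarrow> \<alpha> = \<beta>"
  unfolding padd_def fun_eq_iff by simp

section \<open>Multiplicity of the largest part\<close>

lemma mult_iff:
  assumes "partition \<alpha>" "0 < \<alpha> 0"
  shows "i < mult \<alpha> \<longleftrightarrow> \<alpha> i = \<alpha> 0"
proof -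
  obtain N where "\<forall>i\<ge>N. \<alpha> i = 0" using partition_eventually_zero[OF assms(1)] by blast
  then have "\<alpha> N = 0" by blast
  then have "\<alpha> N \<noteq> \<alpha> 0" using assms(2) by linarith
  define k where "k = (LEAST i. \<alpha> i \<noteq> \<alpha> 0)"
  have k: "\<alpha> k \<noteq> \<alpha> 0" unfolding k_def using \<open>\<alpha> N \<noteq> \<alpha> 0\<close> by (rule LeastI)
  have top: "\<alpha> i = \<alpha> 0 \<longleftrightarrow> i < k" for i
  proof
    assume "\<alpha> i = \<alpha> 0"
    show "i < k"
    proof (rule ccontr)
      assume "\<not> i < k"
      then have "\<alpha> i \<le> \<alpha> k" "\<alpha> k \<le> \<alpha> 0" using partition_antimono[OF assms(1)] by simp_all
      then show False using k \<open>\<alpha> i = \<alpha> 0\<close> by simp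
    qed
  next
    assume "i < k"
    then show "\<alpha> i = \<alpha> 0" unfolding k_def using not_less_Least by blast
  qed
  have "0 < \<alpha> i \<and> \<alpha> i = \<alpha> 0 \<longleftrightarrow> i < k" for i using top[of i] assms(2) by auto
  then have "{i. 0 < \<alpha> i \<and> \<alpha> i = \<alpha> 0} = {..<k}" by auto
  then have "mult \<alpha> = k" unfolding mult_def by simp
  then show ?thesis using top by simp
qed

lemma mult_pos:
  assumes "partition \<alpha>" "0 < \<alpha> 0"
  shows "0 < mult \<alpha>"
  using mult_iff[OF assms, of 0] by simp

lemma mult_eqI:
  assumes "0 < k" "\<And>i. i < k \<Longrightarrow> \<beta> i = \<beta> 0" "\<And>i. k \<le> i \<Longrightarrow> \<beta> i < \<beta> 0"
  shows "mult \<beta> = k"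
proof -
  have "0 < \<beta> i \<and> \<beta> i = \<beta> 0 \<longleftrightarrow> i < k" for i
    using assms(2)[of i] assms(3)[of i] assms(3)[of k] by (cases "i < k") auto
  then have "{i. 0 < \<beta> i \<and> \<beta> i = \<beta> 0} = {..<k}" by auto
  then show ?thesis unfolding mult_def by simp
qed

lemma mult_padd_rect_one:
  assumes "partition \<alpha>" "0 < \<alpha> 0" "0 < c" "c \<le> mult \<alpha>"
  shows "mult (padd \<alpha> (rect 1 c)) = c"
proof (rule mult_eqI[OF assms(3)])
  fix i assume "i < c"
  then have "\<alpha> i = \<alpha> 0" using assms(4) mult_iff[OF assms(1,2), of i] by simp
  then show "padd \<alpha> (rect 1 c) i = padd \<alpha> (rect 1 c) 0"
    using \<open>i < c\<close> assms(3) by (simp add: padd_def rect_def)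
next
  fix i assume "c \<le> i"
  then show "padd \<alpha> (rect 1 c) i < padd \<alpha> (rect 1 c) 0"
    using partition_antimono[OF assms(1), of 0 i] assms(3) by (simp add: padd_def rect_def)
qed

definition raise_top :: "(nat \<Rightarrow> nat) \<Rightarrow> nat \<Rightarrow> nat \<Rightarrow> nat" where
  "raise_top \<alpha> w = padd \<alpha> (rect w (mult \<alpha>))"

lemma raise_top_0 [simp]: "raise_top \<alpha> 0 = \<alpha>"
  by (simp add: raise_top_def padd_def rect_def)

lemma partition_raise_top: "partition \<alpha> \<Longrightarrow> partition (raise_top \<alpha> w)"
  unfolding raise_top_def by (rule partition_padd_rect)

lemma weight_raise_top: "partition \<alpha> \<Longrightarrow> weight (raise_top \<alpha> w) = weight \<alpha> + w * mult \<alpha>"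
  unfolding raise_top_def by (rule weight_padd_rect)

lemma raise_top_pos: "0 < \<alpha> 0 \<Longrightarrow> 0 < raise_top \<alpha> w 0"
  by (simp add: raise_top_def padd_def)

lemma mult_raise_top:
  assumes "partition \<alpha>" "0 < \<alpha> 0"
  shows "mult (raise_top \<alpha> w) = mult \<alpha>"
  unfolding raise_top_def
proof (rule mult_eqI[OF mult_pos[OF assms]])
  fix i assume "i < mult \<alpha>"
  then show "padd \<alpha> (rect w (mult \<alpha>)) i = padd \<alpha> (rect w (mult \<alpha>)) 0"
    using mult_iff[OF assms] mult_pos[OF assms] by (simp add: padd_def rect_def)
next
  fix i assume "mult \<alpha> \<le> i"
  then have "\<alpha> i < \<alpha> 0"
    using mult_iff[OF assms, of i] partition_antimono[OF assms(1), of 0 i] by simp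
  then show "padd \<alpha> (rect w (mult \<alpha>)) i < padd \<alpha> (rect w (mult \<alpha>)) 0"
    using \<open>mult \<alpha> \<le> i\<close> mult_pos[OF assms] by (simp add: padd_def rect_def)
qed

lemma mult_padd_raise_top:
  assumes "partition \<alpha>" "0 < \<alpha> 0" "0 < c" "c \<le> mult \<alpha>"
  shows "mult (padd (raise_top \<alpha> w) (rect 1 c)) = c"
  using assms mult_padd_rect_one[OF partition_raise_top raise_top_pos] mult_raise_top by simp

section \<open>Containment\<close>

lemma contains_rect_one_one:
  assumes "partition \<alpha>" "0 < \<alpha> 0"
  shows "contains \<alpha> (rect 1 1)"
proof -
  obtain N where N: "\<forall>i\<ge>N. \<alpha> i = 0" using partition_eventually_zero[OF assms(1)] by blast
  define f where "f a = (if a = 0 then 0 else N + a)" for a :: nat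
  have "strict_mono f" unfolding strict_mono_def f_def by simp
  moreover have "rect 1 1 a = card {c\<in>{0::nat}. c < \<alpha> (f a)}" for a
  proof (cases "a = 0")
    case True
    then have "{c\<in>{0::nat}. c < \<alpha> (f a)} = {0}" using assms(2) by (auto simp: f_def)
    then show ?thesis using True by (simp add: rect_def)
  next
    case False
    then have "\<alpha> (f a) = 0" using N by (simp add: f_def)
    then show ?thesis using False by (simp add: rect_def)
  qed
  ultimately show ?thesis unfolding contains_def by blast
qed

lemma less_of_card_less:
  assumes "card {c\<in>C. c < (x::nat)} < card {c\<in>C. c < y}"
  shows "x < y"
proof (rule ccontr)
  assume "\<not> x < y"
  then have "card {c\<in>C. c < y} \<le> card {c\<in>C. c < x}" by (intro card_mono) auto
  then show False using assms by simp
qed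

text \<open>Raising the largest parts of \<open>\<alpha> \<supseteq> \<mu>\<close> by \<open>w > 0\<close> makes room for an extra column in the
  first row of \<open>\<mu>\<close>: keep the rows embedding \<open>\<mu>\<close>, but replace the first one by row 0 and add
  the last column of the raised row 0. As \<open>\<mu> 1 < \<mu> 0\<close>, the other kept rows are strictly shorter
  than the first one, so they are not raised.\<close>

lemma contains_raise_top:
  assumes \<alpha>: "partition \<alpha>" "0 < \<alpha> 0" "contains \<alpha> \<mu>" and \<mu>: "\<mu> 1 < \<mu> 0" and w: "0 < w"
  shows "contains (raise_top \<alpha> w) (padd \<mu> (rect 1 1))"
proof -
  obtain f C where f: "strict_mono f" and fC: "\<And>a. \<mu> a = card {c\<in>C. c < \<alpha> (f a)}"
    using \<alpha>(3) unfolding contains_def by blast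
  have f10: "\<alpha> (f 1) < \<alpha> (f 0)" using \<mu> fC[of 0] fC[of 1] less_of_card_less by metis
  define \<beta> where "\<beta> = raise_top \<alpha> w"
  have a0: "\<alpha> (f 0) \<le> \<alpha> 0" using partition_antimono[OF \<alpha>(1)] by simp
  have fa: "\<alpha> (f a) < \<alpha> (f 0)" if "0 < a" for a
  proof -
    have "f 1 \<le> f a" using that f by (simp add: strict_mono_less_eq)
    then show ?thesis using f10 partition_antimono[OF \<alpha>(1)] by (meson le_less_trans)
  qed
  have \<beta>a: "\<beta> (f a) = \<alpha> (f a)" if "0 < a" for a
  proof -
    have "\<not> f a < mult \<alpha>" using fa[OF that] a0 mult_iff[OF \<alpha>(1,2)] by simp
    then show ?thesis by (simp add: \<beta>_def raise_top_def padd_def rect_def)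
  qed
  have \<beta>0: "\<beta> 0 = \<alpha> 0 + w"
    using mult_pos[OF \<alpha>(1,2)] by (simp add: \<beta>_def raise_top_def padd_def rect_def)
  define f' where "f' a = (if a = 0 then 0 else f a)" for a
  have "strict_mono f'"
  proof (rule strict_monoI)
    fix x y :: nat assume "x < y"
    then show "f' x < f' y" using f le_less_trans[of 0 "f x" "f y"] by (simp add: f'_def strict_mono_def)
  qed
  define C' where "C' = insert (\<alpha> 0 + w - 1) {c\<in>C. c < \<alpha> (f 0)}"
  have "padd \<mu> (rect 1 1) a = card {c\<in>C'. c < \<beta> (f' a)}" for a
  proof (cases "a = 0")
    case True
    have "{c\<in>C'. c < \<beta> (f' a)} = insert (\<alpha> 0 + w - 1) {c\<in>C. c < \<alpha> (f 0)}"
      using True \<beta>0 a0 w by (auto simp: C'_def f'_def)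
    moreover have "\<alpha> 0 + w - 1 \<notin> {c\<in>C. c < \<alpha> (f 0)}" using a0 w by auto
    ultimately show ?thesis using True fC[of 0] by (simp add: padd_def rect_def)
  next
    case False
    then have "{c\<in>C'. c < \<beta> (f' a)} = {c\<in>C. c < \<alpha> (f a)}"
      using \<beta>a[of a] fa[of a] a0 by (auto simp: C'_def f'_def)
    then show ?thesis using False fC[of a] by (simp add: padd_def rect_def)
  qed
  then show ?thesis unfolding contains_def \<beta>_def using \<open>strict_mono f'\<close> by blast
qed

lemma contains_raise_top_strict:
  assumes \<mu>: "strict_partition \<mu>" and \<alpha>: "partition \<alpha>" "0 < \<alpha> 0" "contains \<alpha> \<mu>" and w: "0 < w"
  shows "contains (raise_top \<alpha> w) (padd \<mu> (rect 1 1))"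
proof (cases "\<mu> 0 = 0")
  case True
  have "partition \<mu>" using \<mu> unfolding strict_partition_def by simp
  then have "\<mu> i = 0" for i using True partition_antimono[of \<mu> 0 i] by simp
  then have "padd \<mu> (rect 1 1) = rect 1 1" by (simp add: padd_def)
  then show ?thesis
    using contains_rect_one_one[OF partition_raise_top raise_top_pos] \<alpha>(1,2) by simp
next
  case False
  have "\<mu> 0 \<noteq> \<mu> 1" using \<mu> False unfolding strict_partition_def by (metis neq0_conv zero_neq_one)
  moreover have "\<mu> 1 \<le> \<mu> 0" using \<mu> partition_antimono[of \<mu> 0 1] unfolding strict_partition_def by simp
  ultimately show ?thesis using contains_raise_top[OF \<alpha>] w by simp
qed

lemma Q_subset_positive: "Q \<tau> \<nu> \<subseteq> {\<alpha>. partition \<alpha> \<and> 0 < \<alpha> 0}"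
  unfolding Q_def using weight_pos_iff by auto

lemma raise_top_notin_Q:
  assumes "strict_partition \<mu>" "\<alpha> \<in> Q \<mu> (padd \<mu> (rect 1 1))" "0 < w"
  shows "raise_top \<alpha> w \<notin> Q \<mu> (padd \<mu> (rect 1 1))"
  using contains_raise_top_strict[OF assms(1) _ _ _ assms(3)] assms(2) Q_subset_positive
  unfolding Q_def by blast

section \<open>Parametrising \<open>ES\<close>, \<open>MS\<close> and \<open>NS\<close>\<close>

lemma ES_eq_image: "ES S = (\<lambda>(\<alpha>, c). padd \<alpha> (rect 1 c)) ` (SIGMA \<alpha>:S. {1..mult \<alpha>})"
proof (intro set_eqI iffI)
  fix \<beta> assume "\<beta> \<in> ES S"
  then obtain \<alpha> c where "\<alpha> \<in> S" "0 < c" "c \<le> mult \<alpha>" "\<beta> = padd \<alpha> (rect 1 c)"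
    unfolding ES_def Eset_def by blast
  then show "\<beta> \<in> (\<lambda>(\<alpha>, c). padd \<alpha> (rect 1 c)) ` (SIGMA \<alpha>:S. {1..mult \<alpha>})"
    by (intro image_eqI[of _ _ "(\<alpha>, c)"]) auto
next
  fix \<beta> assume "\<beta> \<in> (\<lambda>(\<alpha>, c). padd \<alpha> (rect 1 c)) ` (SIGMA \<alpha>:S. {1..mult \<alpha>})"
  then obtain \<alpha> c where "\<alpha> \<in> S" "c \<in> {1..mult \<alpha>}" "\<beta> = padd \<alpha> (rect 1 c)" by auto
  then have "\<beta> \<in> Eset \<alpha>" unfolding Eset_def by auto
  then show "\<beta> \<in> ES S" unfolding ES_def using \<open>\<alpha> \<in> S\<close> by blast
qed

lemma MS_eq_image: "MS S = case_prod raise_top ` (S \<times> UNIV)"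
  unfolding MS_def Mset_def raise_top_def by auto

lemma NS_eq_image:
  "NS S = (\<lambda>((\<alpha>, w), c). padd (raise_top \<alpha> w) (rect 1 c)) ` (SIGMA (\<alpha>, w):S \<times> UNIV. {1..<mult \<alpha>})"
proof (intro set_eqI iffI)
  fix \<beta> assume "\<beta> \<in> NS S"
  then obtain \<alpha> w c where "\<alpha> \<in> S" "0 < c" "c < mult \<alpha>" "\<beta> = padd (raise_top \<alpha> w) (rect 1 c)"
    unfolding NS_def Nset_def raise_top_def by blast
  then show "\<beta> \<in> (\<lambda>((\<alpha>, w), c). padd (raise_top \<alpha> w) (rect 1 c)) ` (SIGMA (\<alpha>, w):S \<times> UNIV. {1..<mult \<alpha>})"
    by (intro image_eqI[of _ _ "((\<alpha>, w), c)"]) auto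
next
  fix \<beta> assume "\<beta> \<in> (\<lambda>((\<alpha>, w), c). padd (raise_top \<alpha> w) (rect 1 c)) ` (SIGMA (\<alpha>, w):S \<times> UNIV. {1..<mult \<alpha>})"
  then obtain \<alpha> w c where "\<alpha> \<in> S" "c \<in> {1..<mult \<alpha>}" "\<beta> = padd (raise_top \<alpha> w) (rect 1 c)" by auto
  then have "\<beta> \<in> Nset \<alpha>" unfolding Nset_def raise_top_def by (auto simp: Suc_le_eq)
  then show "\<beta> \<in> NS S" unfolding NS_def using \<open>\<alpha> \<in> S\<close> by blast
qed

lemma inj_on_padd_rect_one:
  "inj_on (\<lambda>(\<alpha>, c). padd \<alpha> (rect 1 c)) (SIGMA \<alpha>:{\<alpha>. partition \<alpha> \<and> 0 < \<alpha> 0}. {1..mult \<alpha>})"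
proof (rule inj_onI)
  fix x y
  assume x: "x \<in> (SIGMA \<alpha>:{\<alpha>. partition \<alpha> \<and> 0 < \<alpha> 0}. {1..mult \<alpha>})"
    and y: "y \<in> (SIGMA \<alpha>:{\<alpha>. partition \<alpha> \<and> 0 < \<alpha> 0}. {1..mult \<alpha>})"
    and eq: "(\<lambda>(\<alpha>, c). padd \<alpha> (rect 1 c)) x = (\<lambda>(\<alpha>, c). padd \<alpha> (rect 1 c)) y"
  obtain \<alpha> c \<alpha>' c' where xy: "x = (\<alpha>, c)" "y = (\<alpha>', c')" by fastforce
  have "c = c'"
    using mult_padd_rect_one[of \<alpha> c] mult_padd_rect_one[of \<alpha>' c'] x y eq xy by auto
  then show "x = y" using eq xy padd_right_cancel by simp
qed

lemma raise_top_eqD: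
  assumes "partition \<alpha>" "0 < \<alpha> 0" "partition \<alpha>'" "0 < \<alpha>' 0"
    and "w \<le> w'" "raise_top \<alpha> w = raise_top \<alpha>' w'"
  shows "\<alpha> = raise_top \<alpha>' (w' - w)"
proof -
  have m: "mult \<alpha> = mult \<alpha>'"
    using mult_raise_top[OF assms(1,2), of w] mult_raise_top[OF assms(3,4), of w'] assms(6) by simp
  have "padd \<alpha> (rect w (mult \<alpha>)) = padd (raise_top \<alpha>' (w' - w)) (rect w (mult \<alpha>))"
    using fun_cong[OF assms(6)] assms(5) m by (auto simp: raise_top_def padd_def rect_def)
  then show ?thesis by (rule padd_right_cancel)
qed

lemma raise_top_inj:
  assumes S: "S \<subseteq> {\<alpha>. partition \<alpha> \<and> 0 < \<alpha> 0}" "\<forall>\<alpha>\<in>S. \<forall>w>0. raise_top \<alpha> w \<notin> S"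
    and "\<alpha> \<in> S" "\<alpha>' \<in> S" "raise_top \<alpha> w = raise_top \<alpha>' w'"
  shows "\<alpha> = \<alpha>' \<and> w = w'"
proof -
  have le: "\<alpha> = \<alpha>' \<and> w = w'"
    if "\<alpha> \<in> S" "\<alpha>' \<in> S" "w \<le> w'" "raise_top \<alpha> w = raise_top \<alpha>' w'" for \<alpha> \<alpha>' w w'
  proof -
    have "partition \<alpha>" "0 < \<alpha> 0" "partition \<alpha>'" "0 < \<alpha>' 0" using that(1,2) S(1) by auto
    then have \<alpha>: "\<alpha> = raise_top \<alpha>' (w' - w)" using raise_top_eqD that(3,4) by blast
    have "\<not> 0 < w' - w"
    proof
      assume "0 < w' - w"
      then have "raise_top \<alpha>' (w' - w) \<notin> S" using S(2) that(2) by blast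
      then show False using \<alpha> that(1) by simp
    qed
    then show ?thesis using \<alpha> that(3) by simp
  qed
  show ?thesis using le[of \<alpha> \<alpha>' w w'] le[of \<alpha>' \<alpha> w' w] assms(3-5) by (cases "w \<le> w'") auto
qed

lemma inj_on_raise_top:
  assumes "S \<subseteq> {\<alpha>. partition \<alpha> \<and> 0 < \<alpha> 0}" "\<forall>\<alpha>\<in>S. \<forall>w>0. raise_top \<alpha> w \<notin> S"
  shows "inj_on (case_prod raise_top) (S \<times> UNIV)"
  using raise_top_inj[OF assms] by (intro inj_onI) auto

lemma inj_on_padd_raise_top:
  assumes S: "S \<subseteq> {\<alpha>. partition \<alpha> \<and> 0 < \<alpha> 0}" "\<forall>\<alpha>\<in>S. \<forall>w>0. raise_top \<alpha> w \<notin> S"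
  shows "inj_on (\<lambda>((\<alpha>, w), c). padd (raise_top \<alpha> w) (rect 1 c)) (SIGMA (\<alpha>, w):S \<times> UNIV. {1..<mult \<alpha>})"
proof (rule inj_onI)
  fix x y
  assume x: "x \<in> (SIGMA (\<alpha>, w):S \<times> UNIV. {1..<mult \<alpha>})" and y: "y \<in> (SIGMA (\<alpha>, w):S \<times> UNIV. {1..<mult \<alpha>})"
    and eq: "(\<lambda>((\<alpha>, w), c). padd (raise_top \<alpha> w) (rect 1 c)) x = (\<lambda>((\<alpha>, w), c). padd (raise_top \<alpha> w) (rect 1 c)) y"
  obtain \<alpha> w c \<alpha>' w' c' where xy: "x = ((\<alpha>, w), c)" "y = ((\<alpha>', w'), c')" by (metis prod.exhaust)
  have a: "partition \<alpha>" "0 < \<alpha> 0" "0 < c" "c \<le> mult \<alpha>" and \<alpha>S: "\<alpha> \<in> S"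
    using x xy S(1) by auto
  have a': "partition \<alpha>'" "0 < \<alpha>' 0" "0 < c'" "c' \<le> mult \<alpha>'" and \<alpha>'S: "\<alpha>' \<in> S"
    using y xy S(1) by auto
  have "c = c'" using mult_padd_raise_top[OF a, of w] mult_padd_raise_top[OF a', of w'] eq xy by simp
  then have "raise_top \<alpha> w = raise_top \<alpha>' w'" using eq xy padd_right_cancel by simp
  then show "x = y" using raise_top_inj[OF S \<alpha>S \<alpha>'S] xy \<open>c = c'\<close> by simp
qed

section \<open>Absolute convergence of sums over partitions\<close>

lemma sum_lessThan_eq_sum_diff:
  assumes "\<And>i. f (Suc i) \<le> (f i :: nat)"
  shows "sum f {..<n} = (\<Sum>i<n. Suc i * (f i - f (Suc i))) + n * f n"
proof (induction n)
  case (Suc n)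
  have "Suc n * (f n - f (Suc n)) + Suc n * f (Suc n) = Suc n * f n"
    using assms[of n] by (simp flip: add_mult_distrib2)
  then have "n * f n + f n = Suc n * (f n - f (Suc n)) + Suc n * f (Suc n)" by simp
  then show ?case using Suc.IH by simp
qed simp

lemma weight_eq_sum_diff:
  assumes "partition \<alpha>" "\<And>i. N \<le> i \<Longrightarrow> \<alpha> i = 0"
  shows "weight \<alpha> = (\<Sum>i<N. Suc i * (\<alpha> i - \<alpha> (Suc i)))"
proof -
  have "weight \<alpha> = sum \<alpha> {..<N}" using weight_eq_sum_lessThan assms(2) by blast
  also have "\<dots> = (\<Sum>i<N. Suc i * (\<alpha> i - \<alpha> (Suc i))) + N * \<alpha> N"
    using assms(1) unfolding partition_def by (intro sum_lessThan_eq_sum_diff) simp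
  finally show ?thesis using assms(2)[of N] by simp
qed

lemma partition_eqI_diff:
  assumes "partition \<alpha>" "partition \<beta>" "\<And>i. N \<le> i \<Longrightarrow> \<alpha> i = 0" "\<And>i. N \<le> i \<Longrightarrow> \<beta> i = 0"
    and "\<And>i. i < N \<Longrightarrow> \<alpha> i - \<alpha> (Suc i) = \<beta> i - \<beta> (Suc i)"
  shows "\<alpha> = \<beta>"
proof
  fix i
  show "\<alpha> i = \<beta> i"
  proof (cases "i \<le> N")
    case True
    then show ?thesis
    proof (induction rule: inc_induct)
      case (step n)
      have "\<alpha> (Suc n) \<le> \<alpha> n" "\<beta> (Suc n) \<le> \<beta> n" using assms(1,2) unfolding partition_def by simp_all
      then show ?case using assms(5)[OF step(2)] step(3) by simp
    qed (use assms(3,4) in simp)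
  qed (use assms(3,4) in simp)
qed

lemma sum_power_le_exp:
  fixes x r :: real
  assumes "0 \<le> x" "x \<le> r" "r < 1"
  shows "(\<Sum>k\<le>M. x ^ k) \<le> exp (x / (1 - r))"
proof -
  have "(\<Sum>k\<le>M. x ^ k) = (1 - x ^ Suc M) / (1 - x)"
    using sum_gp_strict[of x "Suc M"] assms by (simp add: lessThan_Suc_atMost)
  also have "\<dots> \<le> 1 / (1 - x)" using assms by (intro divide_right_mono) auto
  also have "\<dots> = 1 + x / (1 - x)" using assms by (simp add: field_simps)
  also have "x / (1 - x) \<le> x / (1 - r)" using assms by (intro divide_left_mono) auto
  also have "1 + x / (1 - r) \<le> exp (x / (1 - r))" by (rule exp_ge_add_one_self)
  finally show ?thesis by simp
qed

text \<open>Euler's product bound: a partition is determined by the multiplicities \<open>\<alpha> i - \<alpha> (i + 1)\<close>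
  of its part sizes \<open>i + 1\<close>, and \<open>r\<^sup>|\<^sup>\<alpha>\<^sup>|\<close> factors accordingly.\<close>

lemma sum_power_weight_le_prod:
  fixes r :: real
  assumes r: "0 \<le> r" and A: "finite A" "A \<subseteq> {\<alpha>. partition \<alpha>}" "\<And>\<alpha>. \<alpha> \<in> A \<Longrightarrow> weight \<alpha> \<le> N"
  shows "(\<Sum>\<alpha>\<in>A. r ^ weight \<alpha>) \<le> (\<Prod>i<N. \<Sum>k\<le>N. (r ^ Suc i) ^ k)"
proof -
  have zero: "\<alpha> i = 0" if "\<alpha> \<in> A" "N \<le> i" for \<alpha> i
    using partition_zero_beyond_weight[of \<alpha> i] A(2) that A(3)[OF that(1)] by auto
  define \<phi> where "\<phi> \<alpha> = restrict (\<lambda>i. \<alpha> i - \<alpha> (Suc i)) {..<N}" for \<alpha> :: "nat \<Rightarrow> nat"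
  define g where "g e = (\<Prod>i<N. (r ^ Suc i) ^ e i)" for e :: "nat \<Rightarrow> nat"
  have inj: "inj_on \<phi> A"
  proof (rule inj_onI)
    fix \<alpha> \<beta> assume \<alpha>\<beta>: "\<alpha> \<in> A" "\<beta> \<in> A" and eq: "\<phi> \<alpha> = \<phi> \<beta>"
    have "\<alpha> i - \<alpha> (Suc i) = \<beta> i - \<beta> (Suc i)" if "i < N" for i
      using fun_cong[OF eq, of i] that by (simp add: \<phi>_def)
    then show "\<alpha> = \<beta>" using partition_eqI_diff[of \<alpha> \<beta> N] A(2) zero \<alpha>\<beta> by blast
  qed
  have weight: "r ^ weight \<alpha> = g (\<phi> \<alpha>)" if "\<alpha> \<in> A" for \<alpha>
  proof -
    have "weight \<alpha> = (\<Sum>i<N. Suc i * (\<alpha> i - \<alpha> (Suc i)))"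
      using weight_eq_sum_diff[of \<alpha> N] A(2) zero[OF that] that by blast
    then have "r ^ weight \<alpha> = (\<Prod>i<N. r ^ (Suc i * (\<alpha> i - \<alpha> (Suc i))))" by (simp only: power_sum)
    also have "\<dots> = g (\<phi> \<alpha>)"
      unfolding g_def \<phi>_def by (intro prod.cong refl) (simp only: power_mult, simp)
    finally show ?thesis .
  qed
  have image: "\<phi> ` A \<subseteq> PiE {..<N} (\<lambda>_. {..N})"
  proof
    fix e assume "e \<in> \<phi> ` A"
    then obtain \<alpha> where \<alpha>: "\<alpha> \<in> A" "e = \<phi> \<alpha>" by blast
    have "\<alpha> i - \<alpha> (Suc i) \<le> N" for i
      using partition_le_weight[of \<alpha> i] A(2,3) \<alpha>(1) by fastforce
    then show "e \<in> PiE {..<N} (\<lambda>_. {..N})" using \<alpha>(2) by (auto simp: \<phi>_def)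
  qed
  have "(\<Sum>\<alpha>\<in>A. r ^ weight \<alpha>) = sum g (\<phi> ` A)"
    using weight sum.reindex[OF inj, of g] by simp
  also have "\<dots> \<le> sum g (PiE {..<N} (\<lambda>_. {..N}))"
    by (rule sum_mono2) (use image r in \<open>auto simp: g_def finite_PiE intro!: prod_nonneg\<close>)
  also have "\<dots> = (\<Prod>i<N. \<Sum>k\<le>N. (r ^ Suc i) ^ k)"
    unfolding g_def by (rule prod_sum_PiE[symmetric]) auto
  finally show ?thesis .
qed

lemma prod_sum_power_le_exp:
  fixes r :: real
  assumes r: "0 \<le> r" "r < 1"
  shows "(\<Prod>i<N. \<Sum>k\<le>M. (r ^ Suc i) ^ k) \<le> exp (1 / (1 - r) ^ 2)"
proof -
  have "(\<Prod>i<N. \<Sum>k\<le>M. (r ^ Suc i) ^ k) \<le> (\<Prod>i<N. exp (r ^ Suc i / (1 - r)))"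
  proof (rule prod_mono)
    fix i
    have "r ^ Suc i \<le> r" using r by (simp add: power_le_one mult_left_le)
    then show "0 \<le> (\<Sum>k\<le>M. (r ^ Suc i) ^ k) \<and> (\<Sum>k\<le>M. (r ^ Suc i) ^ k) \<le> exp (r ^ Suc i / (1 - r))"
      using sum_power_le_exp[of "r ^ Suc i" r M] r by (auto intro!: sum_nonneg)
  qed
  also have "\<dots> = exp ((\<Sum>i<N. r ^ Suc i) / (1 - r))" by (simp add: exp_sum sum_divide_distrib)
  also have "\<dots> \<le> exp (1 / (1 - r) ^ 2)"
  proof -
    have "(\<Sum>i<N. r ^ Suc i) \<le> (\<Sum>i<Suc N. r ^ i)"
      using sum.lessThan_Suc_shift[of "\<lambda>i. r ^ i" N] by simp
    also have "\<dots> = (1 - r ^ Suc N) / (1 - r)" using sum_gp_strict[of r "Suc N"] r by simp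
    also have "\<dots> \<le> 1 / (1 - r)" using r by (intro divide_right_mono) auto
    finally have "(\<Sum>i<N. r ^ Suc i) / (1 - r) \<le> 1 / (1 - r) / (1 - r)"
      using r by (intro divide_right_mono) auto
    then show ?thesis by (simp add: power2_eq_square)
  qed
  finally show ?thesis .
qed

lemma summable_on_power_weight:
  fixes r :: real
  assumes "0 \<le> r" "r < 1" "A \<subseteq> {\<alpha>. partition \<alpha>}"
  shows "(\<lambda>\<alpha>. r ^ weight \<alpha>) summable_on A"
proof (rule nonneg_bdd_above_summable_on)
  show "bdd_above (sum (\<lambda>\<alpha>. r ^ weight \<alpha>) ` {B. B \<subseteq> A \<and> finite B})"
  proof (rule bdd_aboveI)
    fix s assume "s \<in> sum (\<lambda>\<alpha>. r ^ weight \<alpha>) ` {B. B \<subseteq> A \<and> finite B}"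
    then obtain B where B: "B \<subseteq> A" "finite B" "s = sum (\<lambda>\<alpha>. r ^ weight \<alpha>) B" by blast
    have "s \<le> (\<Prod>i<sum weight B. \<Sum>k\<le>sum weight B. (r ^ Suc i) ^ k)"
      unfolding B(3) using B(1,2) assms(1,3) by (intro sum_power_weight_le_prod) (auto intro: member_le_sum)
    also have "\<dots> \<le> exp (1 / (1 - r) ^ 2)" using assms(1,2) by (rule prod_sum_power_le_exp)
    finally show "s \<le> exp (1 / (1 - r) ^ 2)" .
  qed
qed (use assms in simp)

lemma summable_on_partitions:
  fixes f :: "(nat \<Rightarrow> nat) \<Rightarrow> complex"
  assumes "A \<subseteq> {\<alpha>. partition \<alpha>}" "norm z < 1"
    and "\<And>\<alpha>. \<alpha> \<in> A \<Longrightarrow> norm (f \<alpha>) \<le> K * norm z ^ weight \<alpha>"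
  shows "f summable_on A"
proof -
  have "(\<lambda>\<alpha>. K * norm z ^ weight \<alpha>) summable_on A"
    using summable_on_power_weight[of "norm z" A] assms(1,2) by (intro summable_on_cmult_right) auto
  then have "(\<lambda>\<alpha>. norm (f \<alpha>)) summable_on A"
    by (rule summable_on_comparison_test) (use assms(3) in auto)
  then show ?thesis by (rule abs_summable_summable)
qed

lemma infsum_coeffs:
  fixes h :: "nat \<Rightarrow> nat \<Rightarrow> complex"
  assumes A: "A \<subseteq> {\<alpha>. partition \<alpha>}" and summable: "(\<lambda>\<alpha>. h (weight \<alpha>) (mult \<alpha>)) summable_on A"
  shows "(\<Sum>\<^sub>\<infinity>(n, m). of_nat (coeffs A n m) * h n m) = (\<Sum>\<^sub>\<infinity>\<alpha>\<in>A. h (weight \<alpha>) (mult \<alpha>))"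
proof -
  define B where "B p = {\<alpha>\<in>A. weight \<alpha> = fst p \<and> mult \<alpha> = snd p}" for p :: "nat \<times> nat"
  define j where "j \<alpha> = ((weight \<alpha>, mult \<alpha>), \<alpha>)" for \<alpha> :: "nat \<Rightarrow> nat"
  define H where "H = (\<lambda>(p :: nat \<times> nat, \<alpha> :: nat \<Rightarrow> nat). h (fst p) (snd p))"
  have inj: "inj_on j A" unfolding j_def by (rule inj_onI) simp
  have image: "j ` A = Sigma UNIV B" unfolding j_def B_def by force
  have Hj: "H \<circ> j = (\<lambda>\<alpha>. h (weight \<alpha>) (mult \<alpha>))" unfolding H_def j_def by (simp add: o_def)
  have "finite (B p)" for p
  proof (rule finite_subset)
    show "B p \<subseteq> {\<alpha>. partition \<alpha> \<and> weight \<alpha> = fst p}" using A unfolding B_def by auto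
  qed (rule finite_partitions_of_weight)
  then have "(\<Sum>\<^sub>\<infinity>\<alpha>\<in>B p. h (fst p) (snd p)) = of_nat (coeffs A (fst p) (snd p)) * h (fst p) (snd p)" for p
    unfolding B_def coeffs_def by simp
  then have "(\<Sum>\<^sub>\<infinity>(n, m). of_nat (coeffs A n m) * h n m) = (\<Sum>\<^sub>\<infinity>p. \<Sum>\<^sub>\<infinity>\<alpha>\<in>B p. h (fst p) (snd p))"
    by (simp add: split_def)
  also have "\<dots> = infsum H (Sigma UNIV B)"
  proof -
    have "H summable_on Sigma UNIV B" using summable_on_reindex[OF inj, of H] summable unfolding image Hj by simp
    then show ?thesis unfolding H_def by (rule infsum_Sigma'_banach)
  qed
  also have "\<dots> = (\<Sum>\<^sub>\<infinity>\<alpha>\<in>A. h (weight \<alpha>) (mult \<alpha>))"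
    unfolding image[symmetric] infsum_reindex[OF inj] Hj ..
  finally show ?thesis .
qed

lemma F_eq_infsum:
  assumes "A \<subseteq> {\<alpha>. partition \<alpha>}" "norm z < 1" "norm t \<le> 1"
  shows "F A z t = (\<Sum>\<^sub>\<infinity>\<alpha>\<in>A. z ^ weight \<alpha> * t ^ mult \<alpha>)"
    and "(\<lambda>\<alpha>. z ^ weight \<alpha> * t ^ mult \<alpha>) summable_on A"
proof -
  show summable: "(\<lambda>\<alpha>. z ^ weight \<alpha> * t ^ mult \<alpha>) summable_on A"
  proof (rule summable_on_partitions[OF assms(1,2), of _ 1])
    fix \<alpha>
    have "norm t ^ mult \<alpha> \<le> 1" using assms(3) by (simp add: power_le_one)
    then show "norm (z ^ weight \<alpha> * t ^ mult \<alpha>) \<le> 1 * norm z ^ weight \<alpha>"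
      by (simp add: norm_mult norm_power mult_left_le)
  qed
  have "F A z t = (\<Sum>\<^sub>\<infinity>(n, m). of_nat (coeffs A n m) * (z ^ n * t ^ m))"
    unfolding F_def gf_def by (simp add: mult.assoc)
  also have "\<dots> = (\<Sum>\<^sub>\<infinity>\<alpha>\<in>A. z ^ weight \<alpha> * t ^ mult \<alpha>)"
    using infsum_coeffs[OF assms(1), of "\<lambda>n m. z ^ n * t ^ m"] summable by simp
  finally show "F A z t = (\<Sum>\<^sub>\<infinity>\<alpha>\<in>A. z ^ weight \<alpha> * t ^ mult \<alpha>)" .
qed

lemma F_image:
  assumes "inj_on \<phi> A" "\<phi> ` A \<subseteq> {\<alpha>. partition \<alpha>}" "norm z < 1" "norm t \<le> 1"
  shows "F (\<phi> ` A) z t = (\<Sum>\<^sub>\<infinity>a\<in>A. z ^ weight (\<phi> a) * t ^ mult (\<phi> a))"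
    and "(\<lambda>a. z ^ weight (\<phi> a) * t ^ mult (\<phi> a)) summable_on A"
proof -
  show "F (\<phi> ` A) z t = (\<Sum>\<^sub>\<infinity>a\<in>A. z ^ weight (\<phi> a) * t ^ mult (\<phi> a))"
    unfolding F_eq_infsum(1)[OF assms(2-4)] infsum_reindex[OF assms(1)] o_def ..
  have "(\<lambda>\<alpha>. z ^ weight \<alpha> * t ^ mult \<alpha>) summable_on \<phi> ` A" by (rule F_eq_infsum(2)[OF assms(2-4)])
  then show "(\<lambda>a. z ^ weight (\<phi> a) * t ^ mult (\<phi> a)) summable_on A"
    unfolding summable_on_reindex[OF assms(1)] o_def .
qed

lemma F_image_Sigma:
  assumes "inj_on \<phi> (Sigma A B)" "\<phi> ` Sigma A B \<subseteq> {\<alpha>. partition \<alpha>}" "norm z < 1" "norm t \<le> 1"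
  shows "F (\<phi> ` Sigma A B) z t = (\<Sum>\<^sub>\<infinity>a\<in>A. \<Sum>\<^sub>\<infinity>b\<in>B a. z ^ weight (\<phi> (a, b)) * t ^ mult (\<phi> (a, b)))"
    and "(\<lambda>a. \<Sum>\<^sub>\<infinity>b\<in>B a. z ^ weight (\<phi> (a, b)) * t ^ mult (\<phi> (a, b))) summable_on A"
proof -
  have "(\<lambda>(a, b). z ^ weight (\<phi> (a, b)) * t ^ mult (\<phi> (a, b))) summable_on Sigma A B"
    using F_image(2)[OF assms] by (simp add: split_def)
  then show "F (\<phi> ` Sigma A B) z t = (\<Sum>\<^sub>\<infinity>a\<in>A. \<Sum>\<^sub>\<infinity>b\<in>B a. z ^ weight (\<phi> (a, b)) * t ^ mult (\<phi> (a, b)))"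
    and "(\<lambda>a. \<Sum>\<^sub>\<infinity>b\<in>B a. z ^ weight (\<phi> (a, b)) * t ^ mult (\<phi> (a, b))) summable_on A"
    using F_image(1)[OF assms] by (simp_all add: infsum_Sigma'_banach summable_on_Sigma_banach split_def)
qed

section \<open>The two identities\<close>

lemma add_sum_powers_eq:
  fixes z t :: "'a::comm_ring_1"
  assumes "0 < m"
  shows "z ^ n + (\<Sum>c\<in>{1..<m}. z ^ (n + c) * t ^ c) = z ^ n * (\<Sum>c<m. (z * t) ^ c)"
proof -
  have "(\<Sum>c<m. (z * t) ^ c) = 1 + (\<Sum>c\<in>{1..<m}. (z * t) ^ c)"
    using assms by (simp add: lessThan_atLeast0 sum.atLeast_Suc_lessThan)
  moreover have "(\<Sum>c\<in>{1..<m}. z ^ (n + c) * t ^ c) = z ^ n * (\<Sum>c\<in>{1..<m}. (z * t) ^ c)"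
    by (simp add: sum_distrib_left power_add power_mult_distrib mult.assoc)
  ultimately show ?thesis by (simp add: distrib_left)
qed

lemma F_ES_eq:
  assumes S: "S \<subseteq> {\<alpha>. partition \<alpha> \<and> 0 < \<alpha> 0}" and z: "norm z < 1" and t: "norm t \<le> 1"
  shows "F (ES S) z t = (\<Sum>\<^sub>\<infinity>\<alpha>\<in>S. \<Sum>c=1..mult \<alpha>. z ^ (weight \<alpha> + c) * t ^ c)"
    and "(\<lambda>\<alpha>. \<Sum>c=1..mult \<alpha>. z ^ (weight \<alpha> + c) * t ^ c) summable_on S"
proof -
  let ?\<phi> = "\<lambda>(\<alpha>, c). padd \<alpha> (rect 1 c)"
  have inj: "inj_on ?\<phi> (SIGMA \<alpha>:S. {1..mult \<alpha>})"
    by (rule inj_on_subset[OF inj_on_padd_rect_one]) (use S in auto)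
  have sub: "?\<phi> ` (SIGMA \<alpha>:S. {1..mult \<alpha>}) \<subseteq> {\<alpha>. partition \<alpha>}"
    using S partition_padd_rect by auto
  have summand: "(\<Sum>\<^sub>\<infinity>c\<in>{1..mult \<alpha>}. z ^ weight (?\<phi> (\<alpha>, c)) * t ^ mult (?\<phi> (\<alpha>, c)))
      = (\<Sum>c=1..mult \<alpha>. z ^ (weight \<alpha> + c) * t ^ c)" if "\<alpha> \<in> S" for \<alpha>
  proof -
    have "partition \<alpha>" "0 < \<alpha> 0" using that S by auto
    then have "z ^ weight (?\<phi> (\<alpha>, c)) * t ^ mult (?\<phi> (\<alpha>, c)) = z ^ (weight \<alpha> + c) * t ^ c"
      if "c \<in> {1..mult \<alpha>}" for c
      using mult_padd_rect_one[of \<alpha> c] weight_padd_rect[of \<alpha> 1 c] that by simp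
    then have "(\<Sum>c=1..mult \<alpha>. z ^ weight (?\<phi> (\<alpha>, c)) * t ^ mult (?\<phi> (\<alpha>, c)))
        = (\<Sum>c=1..mult \<alpha>. z ^ (weight \<alpha> + c) * t ^ c)"
      by (rule sum.cong[OF refl])
    then show ?thesis by simp
  qed
  show "F (ES S) z t = (\<Sum>\<^sub>\<infinity>\<alpha>\<in>S. \<Sum>c=1..mult \<alpha>. z ^ (weight \<alpha> + c) * t ^ c)"
    unfolding ES_eq_image F_image_Sigma(1)[OF inj sub z t] using summand by (rule infsum_cong)
  show "(\<lambda>\<alpha>. \<Sum>c=1..mult \<alpha>. z ^ (weight \<alpha> + c) * t ^ c) summable_on S"
    using summable_on_cong[of S, THEN iffD1, OF summand F_image_Sigma(2)[OF inj sub z t]] .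
qed

lemma opE_summand_identity:
  fixes z t :: complex
  shows "(z ^ n + (\<Sum>c=1..m. z ^ (n + c) * t ^ c)) * (1 - z * t) = z ^ n - z * t * (z ^ n * (z * t) ^ m)"
proof -
  have "(z ^ n + (\<Sum>c=1..m. z ^ (n + c) * t ^ c)) * (1 - z * t) = z ^ n * ((1 - z * t) * (\<Sum>c<Suc m. (z * t) ^ c))"
    using add_sum_powers_eq[of "Suc m" z n t] by (simp add: atLeastLessThanSuc_atLeastAtMost mult_ac)
  also have "\<dots> = z ^ n * (1 - (z * t) ^ Suc m)" by (simp only: one_diff_power_eq)
  finally show ?thesis by (simp add: algebra_simps)
qed

theorem opE_eq:
  assumes S: "S \<subseteq> {\<alpha>. partition \<alpha> \<and> 0 < \<alpha> 0}" and z: "norm z < 1" and t: "norm t \<le> 1"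
  shows "opE (coeffs S) z t = F S z 1 + F (ES S) z t"
proof -
  have Sp: "S \<subseteq> {\<alpha>. partition \<alpha>}" using S by auto
  have "norm (z * t) \<le> norm z" using t by (simp add: norm_mult mult_left_le)
  then have zt: "norm (z * t) \<le> 1" "z * t \<noteq> 1" using z by auto
  have F1: "F S z 1 = (\<Sum>\<^sub>\<infinity>\<alpha>\<in>S. z ^ weight \<alpha>)" "(\<lambda>\<alpha>. z ^ weight \<alpha>) summable_on S"
    using F_eq_infsum[OF Sp z, of 1] by simp_all
  note Fzt = F_eq_infsum[OF Sp z zt(1)] and FE = F_ES_eq[OF S z t]
  have "(F S z 1 + F (ES S) z t) * (1 - z * t)
      = (\<Sum>\<^sub>\<infinity>\<alpha>\<in>S. (z ^ weight \<alpha> + (\<Sum>c=1..mult \<alpha>. z ^ (weight \<alpha> + c) * t ^ c)) * (1 - z * t))"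
    using F1 FE by (simp add: infsum_add infsum_cmult_left')
  also have "\<dots> = (\<Sum>\<^sub>\<infinity>\<alpha>\<in>S. z ^ weight \<alpha> + - (z * t * (z ^ weight \<alpha> * (z * t) ^ mult \<alpha>)))"
    by (rule infsum_cong) (subst opE_summand_identity, simp)
  also have "\<dots> = F S z 1 - z * t * F S z (z * t)"
  proof -
    have s: "(\<lambda>\<alpha>. - (z * t * (z ^ weight \<alpha> * (z * t) ^ mult \<alpha>))) summable_on S"
      using Fzt(2) by (simp add: summable_on_uminus summable_on_cmult_right)
    show ?thesis
      unfolding F1(1) Fzt(1) infsum_add[OF F1(2) s] infsum_uminus infsum_cmult_right' by simp
  qed
  finally have key: "(F S z 1 + F (ES S) z t) * (1 - z * t) = F S z 1 - z * t * F S z (z * t)" .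
  have "opE (coeffs S) z t = (F S z 1 - z * t * F S z (z * t)) / (1 - z * t)"
    unfolding opE_def F_def ..
  also have "\<dots> = F S z 1 + F (ES S) z t" using key zt(2) by (simp add: divide_eq_eq)
  finally show ?thesis .
qed

lemma coeffs_eq_0:
  assumes "S \<subseteq> {\<alpha>. partition \<alpha> \<and> 0 < \<alpha> 0}" "n = 0 \<or> m = 0"
  shows "coeffs S n m = 0"
proof -
  have pos: "0 < weight \<alpha> \<and> 0 < mult \<alpha>" if "\<alpha> \<in> S" for \<alpha>
    using assms(1) that weight_pos_iff mult_pos by auto
  have "{\<alpha>\<in>S. weight \<alpha> = n \<and> mult \<alpha> = m} = {}" using assms(2) by (auto dest: pos)
  then show ?thesis unfolding coeffs_def by (simp only: card.empty)
qed

lemma infsum_geometric: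
  fixes x :: complex
  assumes "norm x < 1"
  shows "(\<Sum>\<^sub>\<infinity>w. x ^ w) = 1 / (1 - x)"
proof -
  have "summable (\<lambda>n. norm (x ^ n))" using assms by (simp add: norm_power summable_geometric)
  moreover have "(\<lambda>n. x ^ n) sums (1 / (1 - x))" using geometric_sums[OF assms] by simp
  ultimately have "((\<lambda>n. x ^ n) has_sum (1 / (1 - x))) UNIV" by (rule norm_summable_imp_has_sum)
  then show ?thesis by (rule infsumI)
qed

lemma norm_sum_powers_le:
  fixes x :: complex
  assumes "norm x \<le> r" "r < 1"
  shows "norm (\<Sum>c<m. x ^ c) \<le> 1 / (1 - r)"
proof -
  have "0 \<le> r" using assms(1) norm_ge_zero order_trans by blast
  have "norm (\<Sum>c<m. x ^ c) \<le> (\<Sum>c<m. norm (x ^ c))" by (rule norm_sum)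
  also have "\<dots> \<le> (\<Sum>c<m. r ^ c)" by (rule sum_mono) (use assms(1) in \<open>simp add: norm_power power_mono\<close>)
  also have "\<dots> = (1 - r ^ m) / (1 - r)" using sum_gp_strict[of r m] assms by simp
  also have "\<dots> \<le> 1 / (1 - r)" using assms \<open>0 \<le> r\<close> by (intro divide_right_mono) auto
  finally show ?thesis .
qed

lemma norm_opN_summand_le:
  fixes z t :: complex
  assumes z: "norm z < 1" and t: "norm t \<le> 1" and m: "0 < m"
  shows "norm (1 / (1 - z ^ m) * ((1 - (t * z) ^ m) / (1 - t * z)) * z ^ n)
    \<le> (1 / (1 - norm z)) ^ 2 * norm z ^ n"
proof -
  have tz: "norm (t * z) \<le> norm z" using t by (simp add: norm_mult mult_left_le_one_le)
  then have "(1 - (t * z) ^ m) / (1 - t * z) = (\<Sum>c<m. (t * z) ^ c)"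
    using sum_gp_strict[of "t * z" m] z by auto
  then have geometric: "norm ((1 - (t * z) ^ m) / (1 - t * z)) \<le> 1 / (1 - norm z)"
    using norm_sum_powers_le[OF tz z] by simp
  have "norm (z ^ m) \<le> norm z"
    using m z by (simp add: norm_power power_decreasing[of 1 m "norm z", simplified])
  then have "1 - norm z \<le> norm (1 - z ^ m)" using norm_triangle_ineq2[of 1 "z ^ m"] by simp
  then have "norm (1 / (1 - z ^ m)) \<le> 1 / (1 - norm z)" using z by (simp add: norm_divide frac_le)
  then show ?thesis
    using geometric z unfolding norm_mult norm_power power2_eq_square
    by (intro mult_right_mono mult_mono) auto
qed

lemma opN_eq_infsum:
  assumes S: "S \<subseteq> {\<alpha>. partition \<alpha> \<and> 0 < \<alpha> 0}" and z: "norm z < 1" and t: "norm t \<le> 1"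
  shows "opN (coeffs S) z t
    = (\<Sum>\<^sub>\<infinity>\<alpha>\<in>S. 1 / (1 - z ^ mult \<alpha>) * ((1 - (t * z) ^ mult \<alpha>) / (1 - t * z)) * z ^ weight \<alpha>)"
proof -
  define h where "h n m = 1 / (1 - z ^ m) * ((1 - (t * z) ^ m) / (1 - t * z)) * z ^ n" for n m :: nat
  have Sp: "S \<subseteq> {\<alpha>. partition \<alpha>}" using S by auto
  have gf0: "gf (coeffs S) z 0 = 0"
    unfolding gf_def by (rule infsum_0) (use coeffs_eq_0[OF S] in \<open>auto simp: zero_power\<close>)
  have restrict: "(\<Sum>\<^sub>\<infinity>(n, m)\<in>{(n, m). 1 \<le> n \<and> 1 \<le> m}. of_nat (coeffs S n m) * (1 / (1 - z ^ m))
        * ((1 - (t * z) ^ m) / (1 - t * z)) * z ^ n) = (\<Sum>\<^sub>\<infinity>(n, m). of_nat (coeffs S n m) * h n m)"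
  proof (rule infsum_cong_neutral)
    fix x :: "nat \<times> nat" assume "x \<in> UNIV - {(n, m). 1 \<le> n \<and> 1 \<le> m}"
    then obtain n m where "x = (n, m)" "n = 0 \<or> m = 0" by (cases x) auto
    then show "(\<lambda>(n, m). of_nat (coeffs S n m) * h n m) x = 0" using coeffs_eq_0[OF S] by simp
  qed (auto simp: h_def mult.assoc split: prod.splits)
  have summable: "(\<lambda>\<alpha>. h (weight \<alpha>) (mult \<alpha>)) summable_on S"
    by (rule summable_on_partitions[OF Sp z])
      (use S norm_opN_summand_le[OF z t] mult_pos in \<open>auto simp: h_def\<close>)
  show ?thesis unfolding opN_def gf0 restrict infsum_coeffs[OF Sp summable] by (simp add: h_def)
qed

lemma F_MS_eq:
  assumes S: "S \<subseteq> {\<alpha>. partition \<alpha> \<and> 0 < \<alpha> 0}" and free: "\<forall>\<alpha>\<in>S. \<forall>w>0. raise_top \<alpha> w \<notin> S"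
    and z: "norm z < 1"
  shows "F (MS S) z 1 = (\<Sum>\<^sub>\<infinity>(\<alpha>, w)\<in>S \<times> UNIV. z ^ (weight \<alpha> + w * mult \<alpha>))"
    and "(\<lambda>(\<alpha>, w). z ^ (weight \<alpha> + w * mult \<alpha>)) summable_on S \<times> UNIV"
proof -
  have sub: "case_prod raise_top ` (S \<times> UNIV) \<subseteq> {\<alpha>. partition \<alpha>}"
    using S partition_raise_top by auto
  have "norm (1::complex) \<le> 1" by simp
  note FM = F_image[OF inj_on_raise_top[OF S free] sub z this]
  have summand: "z ^ weight (case_prod raise_top p) * 1 ^ mult (case_prod raise_top p)
      = (\<lambda>(\<alpha>, w). z ^ (weight \<alpha> + w * mult \<alpha>)) p" if "p \<in> S \<times> UNIV" for p
  proof -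
    obtain \<alpha> w where p: "p = (\<alpha>, w)" by (cases p)
    then have "partition \<alpha>" using that S by auto
    then show ?thesis unfolding p by (simp add: weight_raise_top)
  qed
  show "F (MS S) z 1 = (\<Sum>\<^sub>\<infinity>(\<alpha>, w)\<in>S \<times> UNIV. z ^ (weight \<alpha> + w * mult \<alpha>))"
    unfolding MS_eq_image FM(1) by (rule infsum_cong) (rule summand)
  show "(\<lambda>(\<alpha>, w). z ^ (weight \<alpha> + w * mult \<alpha>)) summable_on S \<times> UNIV"
    using summable_on_cong[of "S \<times> UNIV", THEN iffD1, OF summand FM(2)] by simp
qed

lemma F_NS_eq:
  assumes S: "S \<subseteq> {\<alpha>. partition \<alpha> \<and> 0 < \<alpha> 0}" and free: "\<forall>\<alpha>\<in>S. \<forall>w>0. raise_top \<alpha> w \<notin> S"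
    and z: "norm z < 1" and t: "norm t \<le> 1"
  shows "F (NS S) z t
      = (\<Sum>\<^sub>\<infinity>(\<alpha>, w)\<in>S \<times> UNIV. \<Sum>c\<in>{1..<mult \<alpha>}. z ^ (weight \<alpha> + w * mult \<alpha> + c) * t ^ c)"
    and "(\<lambda>(\<alpha>, w). \<Sum>c\<in>{1..<mult \<alpha>}. z ^ (weight \<alpha> + w * mult \<alpha> + c) * t ^ c) summable_on S \<times> UNIV"
proof -
  let ?N = "\<lambda>((\<alpha>, w), c). padd (raise_top \<alpha> w) (rect 1 c)"
  have sub: "?N ` (SIGMA (\<alpha>, w):S \<times> UNIV. {1..<mult \<alpha>}) \<subseteq> {\<alpha>. partition \<alpha>}"
    using S partition_padd_rect partition_raise_top by auto
  note FN = F_image_Sigma[OF inj_on_padd_raise_top[OF S free] sub z t]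
  have summand: "(\<Sum>\<^sub>\<infinity>c\<in>(case p of (\<alpha>, w) \<Rightarrow> {1..<mult \<alpha>}). z ^ weight (?N (p, c)) * t ^ mult (?N (p, c)))
      = (\<lambda>(\<alpha>, w). \<Sum>c\<in>{1..<mult \<alpha>}. z ^ (weight \<alpha> + w * mult \<alpha> + c) * t ^ c) p"
    if "p \<in> S \<times> UNIV" for p
  proof -
    obtain \<alpha> w where p: "p = (\<alpha>, w)" by (cases p)
    then have \<alpha>: "partition \<alpha>" "0 < \<alpha> 0" using that S by auto
    have "z ^ weight (?N (p, c)) * t ^ mult (?N (p, c)) = z ^ (weight \<alpha> + w * mult \<alpha> + c) * t ^ c"
      if "c \<in> {1..<mult \<alpha>}" for c
      using that p mult_padd_raise_top[OF \<alpha>, of c w] \<alpha>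
      by (simp add: weight_padd_rect partition_raise_top weight_raise_top)
    then have "(\<Sum>c\<in>{1..<mult \<alpha>}. z ^ weight (?N (p, c)) * t ^ mult (?N (p, c)))
        = (\<Sum>c\<in>{1..<mult \<alpha>}. z ^ (weight \<alpha> + w * mult \<alpha> + c) * t ^ c)"
      by (rule sum.cong[OF refl])
    then show ?thesis by (simp add: p)
  qed
  show "F (NS S) z t
      = (\<Sum>\<^sub>\<infinity>(\<alpha>, w)\<in>S \<times> UNIV. \<Sum>c\<in>{1..<mult \<alpha>}. z ^ (weight \<alpha> + w * mult \<alpha> + c) * t ^ c)"
    unfolding NS_eq_image FN(1) by (rule infsum_cong) (rule summand)
  show "(\<lambda>(\<alpha>, w). \<Sum>c\<in>{1..<mult \<alpha>}. z ^ (weight \<alpha> + w * mult \<alpha> + c) * t ^ c) summable_on S \<times> UNIV"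
    using summable_on_cong[of "S \<times> UNIV", THEN iffD1, OF summand FN(2)] by simp
qed

text \<open>The \<open>w\<close>-th term of \<open>M(\<alpha>)\<close> supplies the missing \<open>c = 0\<close> term of the \<open>N(\<alpha>)\<close> sum.\<close>

lemma F_MS_NS_eq:
  assumes S: "S \<subseteq> {\<alpha>. partition \<alpha> \<and> 0 < \<alpha> 0}" and free: "\<forall>\<alpha>\<in>S. \<forall>w>0. raise_top \<alpha> w \<notin> S"
    and z: "norm z < 1" and t: "norm t \<le> 1"
  shows "F (MS S) z 1 + F (NS S) z t
    = (\<Sum>\<^sub>\<infinity>\<alpha>\<in>S. \<Sum>\<^sub>\<infinity>w. z ^ (weight \<alpha> + w * mult \<alpha>) * (\<Sum>c<mult \<alpha>. (z * t) ^ c))"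
proof -
  note M = F_MS_eq[OF S free z] and N = F_NS_eq[OF S free z t]
  have combine: "(\<lambda>(\<alpha>, w). z ^ (weight \<alpha> + w * mult \<alpha>)) p
      + (\<lambda>(\<alpha>, w). \<Sum>c\<in>{1..<mult \<alpha>}. z ^ (weight \<alpha> + w * mult \<alpha> + c) * t ^ c) p
      = (\<lambda>(\<alpha>, w). z ^ (weight \<alpha> + w * mult \<alpha>) * (\<Sum>c<mult \<alpha>. (z * t) ^ c)) p"
    if "p \<in> S \<times> UNIV" for p
  proof -
    obtain \<alpha> w where p: "p = (\<alpha>, w)" by (cases p)
    then have "0 < mult \<alpha>" using that S mult_pos by auto
    then show ?thesis
      using add_sum_powers_eq[of "mult \<alpha>" z "weight \<alpha> + w * mult \<alpha>" t] unfolding p by simp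
  qed
  have "F (MS S) z 1 + F (NS S) z t
      = (\<Sum>\<^sub>\<infinity>(\<alpha>, w)\<in>S \<times> UNIV. z ^ (weight \<alpha> + w * mult \<alpha>) * (\<Sum>c<mult \<alpha>. (z * t) ^ c))"
    unfolding M(1) N(1) infsum_add[OF M(2) N(2), symmetric] using combine by (rule infsum_cong)
  also have "\<dots> = (\<Sum>\<^sub>\<infinity>\<alpha>\<in>S. \<Sum>\<^sub>\<infinity>w. z ^ (weight \<alpha> + w * mult \<alpha>) * (\<Sum>c<mult \<alpha>. (z * t) ^ c))"
    using summable_on_cong[of "S \<times> UNIV", THEN iffD1, OF combine summable_on_add[OF M(2) N(2)]]
    by (rule infsum_Sigma'_banach[symmetric])
  finally show ?thesis .
qed

lemma infsum_raise_top_eq_opN_summand: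
  fixes z t :: complex
  assumes z: "norm z < 1" and t: "norm t \<le> 1" and m: "0 < m"
  shows "(\<Sum>\<^sub>\<infinity>w. z ^ (n + w * m) * (\<Sum>c<m. (z * t) ^ c))
    = 1 / (1 - z ^ m) * ((1 - (t * z) ^ m) / (1 - t * z)) * z ^ n"
proof -
  have "norm (z ^ m) < 1" using z m by (simp add: norm_power power_less_one_iff)
  have "norm (t * z) \<le> norm z" using t by (simp add: norm_mult mult_left_le_one_le)
  then have "t * z \<noteq> 1" using z by auto
  then have geometric: "(\<Sum>c<m. (z * t) ^ c) = (1 - (t * z) ^ m) / (1 - t * z)"
    unfolding mult.commute[of z t] sum_gp_strict by simp
  have power: "z ^ (n + w * m) * s = z ^ n * s * (z ^ m) ^ w" for w s
    by (simp add: power_add power_mult mult.commute[of w m])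
  have series: "(\<Sum>\<^sub>\<infinity>w. z ^ (n + w * m) * s) = z ^ n * s * (\<Sum>\<^sub>\<infinity>w. (z ^ m) ^ w)" for s
    unfolding power by (rule infsum_cmult_right')
  show ?thesis unfolding series geometric infsum_geometric[OF \<open>norm (z ^ m) < 1\<close>] by (simp add: mult_ac)
qed

theorem opN_eq:
  assumes S: "S \<subseteq> {\<alpha>. partition \<alpha> \<and> 0 < \<alpha> 0}" and free: "\<forall>\<alpha>\<in>S. \<forall>w>0. raise_top \<alpha> w \<notin> S"
    and z: "norm z < 1" and t: "norm t \<le> 1"
  shows "opN (coeffs S) z t = F (MS S) z 1 + F (NS S) z t"
  unfolding opN_eq_infsum[OF S z t] F_MS_NS_eq[OF S free z t]
proof (rule infsum_cong)
  fix \<alpha> assume "\<alpha> \<in> S"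
  then have "0 < mult \<alpha>" using S mult_pos by auto
  then show "1 / (1 - z ^ mult \<alpha>) * ((1 - (t * z) ^ mult \<alpha>) / (1 - t * z)) * z ^ weight \<alpha>
      = (\<Sum>\<^sub>\<infinity>w. z ^ (weight \<alpha> + w * mult \<alpha>) * (\<Sum>c<mult \<alpha>. (z * t) ^ c))"
    by (rule infsum_raise_top_eq_opN_summand[OF z t, symmetric])
qed

theorem mainTheorem4:
  fixes \<mu> :: "nat \<Rightarrow> nat" and S :: "(nat \<Rightarrow> nat) set"
  assumes "strict_partition \<mu>"
    and "S = Q \<mu> (padd \<mu> (rect 1 1))"
  shows "\<forall>z t. norm z < 1 \<longrightarrow> norm t \<le> 1 \<longrightarrow>
           opE (coeffs S) z t = F S z 1 + F (ES S) z t \<and>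
           opN (coeffs S) z t = F (MS S) z 1 + F (NS S) z t"
proof -
  have positive: "S \<subseteq> {\<alpha>. partition \<alpha> \<and> 0 < \<alpha> 0}" using assms(2) Q_subset_positive by simp
  have free: "\<forall>\<alpha>\<in>S. \<forall>w>0. raise_top \<alpha> w \<notin> S" using assms raise_top_notin_Q by blast
  show ?thesis using opE_eq[OF positive] opN_eq[OF positive free] by blast
qed

end
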